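(* Let $X$ be a nonempty set, $\eta\in[0,1)$, $G\subseteq X\times X$ reflexive, symmetric and idempotent ($G\circ G=G$), $\mu$ a finitely additive measure on $\mathcal P(X)$, and $\mu^{\otimes2}$ a finitely additive set function on the product algebra $\mathcal P(X)\otimes\mathcal P(X)$ with $\mu^{\otimes2}(A\times B)=\mu(A)\mu(B)$. Suppose $G$ has finitely many equivalence classes $C_1,\dots,C_m$, that $\mu(C_j)>0$ for all $j$, and that the coupling law $\mu^{\otimes2}((B\times X)\cap G)=\mu(B)+\eta\,\mu^{\otimes2}((B\times X)\cap G)$ holds for all $B\subseteq X$. Then \[\mu(X)=\frac{m}{1-\eta},\qquad \mu^{\otimes2}(G)=\sum_{j=1}^m\mu(C_j)^2=\frac{m}{(1-\eta)^2},\] and $\mu^{\otimes2}((B\times X)\cap G)=\frac{\mu(B)}{1-\eta}$ for every $B\subseteq X$.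
   Context: For relations, $H\circ K=\{(x,z):\exists y\,(x,y)\in H,(y,z)\in K\}$. A finitely additive measure satisfies $\mu(\varnothing)=0$ and additivity on disjoint pairs. The coupling law stated is the coupling law of the axiom system specialized to $R=X$, $I=\varnothing$, $\Pi_R=\mathrm{id}_X$. *)

theory Defs
  imports Complex_Main
begin

inductive_set prod_algebra :: "'a set \<Rightarrow> ('a \<times> 'a) set set" for X :: "'a set" where
  rect: "A \<subseteq> X \<Longrightarrow> B \<subseteq> X \<Longrightarrow> A \<times> B \<in> prod_algebra X"
| compl: "S \<in> prod_algebra X \<Longrightarrow> (X \<times> X) - S \<in> prod_algebra X"
| union: "S \<in> prod_algebra X \<Longrightarrow> T \<in> prod_algebra X \<Longrightarrow> S \<union> T \<in> prod_algebra X"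

definition fin_add_measure :: "'b set set \<Rightarrow> ('b set \<Rightarrow> real) \<Rightarrow> bool" where
  "fin_add_measure M \<mu> \<longleftrightarrow> \<mu> {} = 0 \<and> (\<forall>A\<in>M. 0 \<le> \<mu> A) \<and>
     (\<forall>A\<in>M. \<forall>B\<in>M. A \<inter> B = {} \<longrightarrow> \<mu> (A \<union> B) = \<mu> A + \<mu> B)"

definition fin_add_fun :: "'b set set \<Rightarrow> ('b set \<Rightarrow> real) \<Rightarrow> bool" where
  "fin_add_fun M \<nu> \<longleftrightarrow> \<nu> {} = 0 \<and>
     (\<forall>A\<in>M. \<forall>B\<in>M. A \<inter> B = {} \<longrightarrow> \<nu> (A \<union> B) = \<nu> A + \<nu> B)"

end

theory Submission
  imports Defs
begin

text \<open>The coupling law is linear in \<open>\<mu>2 ((B \<times> X) \<inter> G)\<close> and solves to \<open>\<mu> B / (1 - \<eta>)\<close>.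
  For an equivalence class \<open>C\<close> of \<open>G\<close> the row \<open>(C \<times> X) \<inter> G\<close> is the square \<open>C \<times> C\<close>, of
  mass \<open>\<mu> C ^ 2\<close>; so \<open>\<mu> C ^ 2 = \<mu> C / (1 - \<eta>)\<close>, and positivity forces \<open>\<mu> C = 1 / (1 - \<eta>)\<close>.
  Summing over the \<open>m\<close> classes gives \<open>\<mu> X\<close>, and the row \<open>B = X\<close> gives \<open>\<mu>2 G = \<mu> X / (1 - \<eta>)\<close>.\<close>

lemma fin_add_measure_Union:
  assumes "fin_add_measure (Pow X) \<mu>"
    and "finite F" and "F \<subseteq> Pow X" and "pairwise disjnt F"
  shows "\<mu> (\<Union>F) = sum \<mu> F"
  using assms(2-4)
proof (induction F rule: finite_induct)
  case empty
  then show ?case using assms(1) by (simp add: fin_add_measure_def)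
next
  case (insert A F)
  have "A \<inter> \<Union>F = {}"
    using insert.prems(2) insert.hyps(2) by (auto simp: pairwise_def disjnt_def)
  then have "\<mu> (A \<union> \<Union>F) = \<mu> A + \<mu> (\<Union>F)"
    using assms(1) insert.prems(1) unfolding fin_add_measure_def by blast
  then show ?case
    using insert by (simp add: pairwise_insert)
qed

lemma fin_add_measure_quotient_sum:
  assumes "fin_add_measure (Pow X) \<mu>" and "equiv X G" and "finite (X // G)"
  shows "\<mu> X = (\<Sum>C\<in>X // G. \<mu> C)"
proof -
  have "X // G \<subseteq> Pow X"
    using assms(2) by (auto dest: in_quotient_imp_subset)
  moreover have "pairwise disjnt (X // G)"
    using quotient_disj[OF assms(2)] by (auto simp: pairwise_def disjnt_def)
  ultimately show ?thesis
    using fin_add_measure_Union[OF assms(1,3)] Union_quotient[OF assms(2)] by simp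
qed

lemma equiv_if_relcomp_idem:
  assumes "G \<subseteq> X \<times> X" and "refl_on X G" and "sym G" and "G O G = G"
  shows "equiv X G"
proof (rule equivI)
  show "trans G"
    using assms(4) unfolding trans_def by blast
qed (use assms in auto)

lemma quotient_times_Int_eq:
  assumes "equiv X G" and "C \<in> X // G"
  shows "(C \<times> X) \<inter> G = C \<times> C"
proof -
  obtain x where "x \<in> X" and C: "C = G `` {x}"
    using assms(2) by (rule quotientE)
  have "(a, b) \<in> G \<longleftrightarrow> b \<in> C" if "a \<in> C" for a b
    using that assms(1) unfolding C by (meson equiv_def symD transD Image_singleton_iff)
  moreover have "C \<subseteq> X"
    using assms by (rule in_quotient_imp_subset)
  ultimately show ?thesis
    by auto
qed

lemma affine_fixpoint_eq:
  fixes v a \<eta> :: "'a :: field"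
  assumes "\<eta> \<noteq> 1" and "v = a + \<eta> * v"
  shows "v = a / (1 - \<eta>)"
proof -
  have "(1 - \<eta>) * v = a"
    using assms(2) by (simp add: algebra_simps)
  then show ?thesis
    using assms(1) by (simp add: field_simps)
qed

theorem corollary5p6:
  fixes X :: "'a set" and \<eta> :: real and G :: "('a \<times> 'a) set"
    and \<mu> :: "'a set \<Rightarrow> real" and \<mu>2 :: "('a \<times> 'a) set \<Rightarrow> real"
  assumes "X \<noteq> {}"
    and "0 \<le> \<eta>" and "\<eta> < 1"
    and "G \<subseteq> X \<times> X" and "refl_on X G" and "sym G" and "G O G = G"
    and "fin_add_measure (Pow X) \<mu>"
    and "fin_add_fun (prod_algebra X) \<mu>2"
    and "\<And>A B. A \<subseteq> X \<Longrightarrow> B \<subseteq> X \<Longrightarrow> \<mu>2 (A \<times> B) = \<mu> A * \<mu> B"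
    and "finite (X // G)"
    and "\<And>C. C \<in> X // G \<Longrightarrow> \<mu> C > 0"
    and "\<And>B. B \<subseteq> X \<Longrightarrow> \<mu>2 ((B \<times> X) \<inter> G) = \<mu> B + \<eta> * \<mu>2 ((B \<times> X) \<inter> G)"
  shows "\<mu> X = real (card (X // G)) / (1 - \<eta>)
    \<and> \<mu>2 G = (\<Sum>C\<in>X // G. (\<mu> C)^2)
    \<and> (\<Sum>C\<in>X // G. (\<mu> C)^2) = real (card (X // G)) / (1 - \<eta>)^2
    \<and> (\<forall>B. B \<subseteq> X \<longrightarrow> \<mu>2 ((B \<times> X) \<inter> G) = \<mu> B / (1 - \<eta>))"
proof -
  have equiv: "equiv X G"
    using assms(4-7) by (rule equiv_if_relcomp_idem)
  have row: "\<mu>2 ((B \<times> X) \<inter> G) = \<mu> B / (1 - \<eta>)" if "B \<subseteq> X" for B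
    using assms(3) assms(13)[OF that] by (intro affine_fixpoint_eq) auto
  have class_mass: "\<mu> C = 1 / (1 - \<eta>)" if C: "C \<in> X // G" for C
  proof -
    have "C \<subseteq> X"
      using equiv C by (rule in_quotient_imp_subset)
    then have "\<mu> C * \<mu> C = \<mu>2 ((C \<times> X) \<inter> G)"
      using assms(10) quotient_times_Int_eq[OF equiv C] by simp
    also have "\<dots> = \<mu> C * (1 / (1 - \<eta>))"
      using row \<open>C \<subseteq> X\<close> by simp
    finally show ?thesis
      using assms(12)[OF C] mult_left_cancel by (metis less_irrefl)
  qed
  have mass: "\<mu> X = real (card (X // G)) / (1 - \<eta>)"
    using fin_add_measure_quotient_sum[OF assms(8) equiv assms(11)] class_mass by simp
  have squares: "(\<Sum>C\<in>X // G. (\<mu> C)^2) = real (card (X // G)) / (1 - \<eta>)^2"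
    using class_mass by (simp add: power_divide)
  have "\<mu>2 G = \<mu> X / (1 - \<eta>)"
    using row[of X] assms(4) by (simp add: Int_absorb1)
  then show ?thesis
    using mass squares row by (simp add: power2_eq_square)
qed

end
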